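(* Let $G=([n],E)$ be an undirected graph with pathwidth $s=\mathrm{pw}(G)\ge 1$. Then there exist a function $c:[n]\to[s]$ and a permutation $u\in\Pi([n])$ such that for every $i\in[n]$ at least one of the following holds: (1) for every neighbour $k$ of $i$ in $G$, $u(i)\le u(k)$; (2) for all $j,k\in[n]$ such that $c(j)=c(i)$, $u(i)<u(j)$ and $k$ is a neighbour of $j$ in $G$, we have $u(i)\le u(k)$.
   Context: $[n]=\{1,\dots,n\}$. $\Pi([n])$ is the set of permutations of $[n]$ written as words $(u_1,\dots,u_n)$ in which each element occurs once; $u(i)$ denotes the position of $i$ in $u$. A path decomposition of an undirected graph $G=(V,E)$ is a sequence $X_1,\dots,X_p$ of subsets of $V$ such that every vertex lies in some $X_a$, every edge has both endpoints in some common $X_a$, and if $v\in X_a\cap X_b$ with $a<b$ then $v\in X_c$ for all $c\in[a,b]$. Its size is $\max_a|X_a|-1$, and the pathwidth $\mathrm{pw}(G)$ is the minimum size of a path decomposition of $G$. *)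

theory Defs
  imports Main
begin

text \<open>Undirected graph on vertex set V given by a symmetric edge relation E (as a set of ordered pairs).
  A path decomposition is a list X of bags X!0,...,X!(p-1).\<close>

definition is_path_decomposition :: "'a set \<Rightarrow> ('a \<times> 'a) set \<Rightarrow> 'a set list \<Rightarrow> bool" where
  "is_path_decomposition V E X \<longleftrightarrow>
     (\<forall>a < length X. X ! a \<subseteq> V) \<and>
     (\<forall>v\<in>V. \<exists>a < length X. v \<in> X ! a) \<and>
     (\<forall>(v, w)\<in>E. \<exists>a < length X. v \<in> X ! a \<and> w \<in> X ! a) \<and>
     (\<forall>v a b c. a \<le> c \<and> c \<le> b \<and> b < length X \<and> v \<in> X ! a \<and> v \<in> X ! b \<longrightarrow> v \<in> X ! c)"

definition pd_size :: "'a set list \<Rightarrow> nat" where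
  "pd_size X = Max (insert 0 (card ` set X)) - 1"

definition pathwidth :: "'a set \<Rightarrow> ('a \<times> 'a) set \<Rightarrow> nat" where
  "pathwidth V E = (LEAST s. \<exists>X. is_path_decomposition V E X \<and> pd_size X = s)"

end

theory Submission
  imports Defs
begin

text \<open>Take a path decomposition of minimum size \<open>s\<close> and order the vertices by the index of the
  last bag containing them. If \<open>w\<close> comes after \<open>p\<close> but has a neighbour not after \<open>p\<close>, then \<open>w\<close>
  lives in a bag up to that neighbour's last bag and in a bag from \<open>p\<close>'s last bag on, hence in
  \<open>p\<close>'s last bag; so at most \<open>s\<close> such \<open>w\<close> exist. Every vertex \<open>j\<close> with an earlier neighbour
  spans the interval from its earliest neighbour to itself, and these intervals overlap at most
  \<open>s\<close>-fold, so a greedy colouring by left endpoints uses \<open>s\<close> colours. If \<open>i\<close> and a later \<open>j\<close> of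
  the same colour had a neighbour of \<open>j\<close> before \<open>i\<close>, the intervals of \<open>i\<close> and \<open>j\<close> would
  overlap.\<close>

lemma unused_colour_exists:
  assumes "finite N" "card N < s"
  shows "\<exists>col\<in>{1..s}. col \<notin> c ` N"
proof -
  have "card (c ` N) < card {1..s}"
    using assms card_image_le[of N c] by simp
  then have "\<not> {1..s} \<subseteq> c ` N"
    using assms(1) by (meson card_mono finite_imageI leD)
  then show ?thesis by blast
qed

lemma interval_colouring:
  fixes J :: "'a set" and a b :: "'a \<Rightarrow> nat"
  assumes "finite J" and "\<forall>j\<in>J. a j < b j"
    and "\<forall>i\<in>J. card {j\<in>J. a j \<le> a i \<and> a i < b j} \<le> s"
  shows "\<exists>c. c ` J \<subseteq> {1..s} \<and>
           (\<forall>i\<in>J. \<forall>j\<in>J. i \<noteq> j \<and> a i < b j \<and> a j < b i \<longrightarrow> c i \<noteq> c j)"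
  using assms
proof (induction J rule: finite_ranking_induct[where f = a])
  case empty
  then show ?case by auto
next
  case (insert x S)
  show ?case
  proof (cases "x \<in> S")
    case True
    then show ?thesis using insert by (simp add: insert_absorb)
  next
    case x_new: False
    have "\<forall>i\<in>S. card {j\<in>S. a j \<le> a i \<and> a i < b j} \<le> s"
    proof
      fix i assume "i \<in> S"
      have "card {j\<in>S. a j \<le> a i \<and> a i < b j} \<le> card {j\<in>insert x S. a j \<le> a i \<and> a i < b j}"
        by (rule card_mono) (use insert.hyps in auto)
      also have "\<dots> \<le> s" using \<open>i \<in> S\<close> insert.prems(2) by auto
      finally show "card {j\<in>S. a j \<le> a i \<and> a i < b j} \<le> s" .
    qed
    moreover have "\<forall>j\<in>S. a j < b j"
      using insert.prems(1) by simp
    ultimately obtain c where c_range: "c ` S \<subseteq> {1..s}"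
      and c_proper: "\<forall>i\<in>S. \<forall>j\<in>S. i \<noteq> j \<and> a i < b j \<and> a j < b i \<longrightarrow> c i \<noteq> c j"
      using insert.IH by blast
    define N where "N = {j\<in>S. a x < b j}"
    have fin_N: "finite N"
      using insert.hyps(1) N_def by simp
    have "insert x N \<subseteq> {j\<in>insert x S. a j \<le> a x \<and> a x < b j}"
      using insert.hyps(2) insert.prems(1) N_def by auto
    then have "card (insert x N) \<le> card {j\<in>insert x S. a j \<le> a x \<and> a x < b j}"
      by (rule card_mono[rotated]) (use insert.hyps(1) in simp)
    also have "\<dots> \<le> s"
      using insert.prems(2) by simp
    finally have "card N < s"
      using fin_N x_new N_def by simp
    then obtain col where col: "col \<in> {1..s}" "col \<notin> c ` N"
      using unused_colour_exists[OF fin_N] by blast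
    \<comment> \<open>\<open>x\<close> has the largest left endpoint, so every interval of \<open>S\<close> meeting it lies in \<open>N\<close>.\<close>
    have "\<forall>i\<in>insert x S. \<forall>j\<in>insert x S.
            i \<noteq> j \<and> a i < b j \<and> a j < b i \<longrightarrow> (c(x := col)) i \<noteq> (c(x := col)) j"
    proof (intro ballI impI)
      fix i j assume "i \<in> insert x S" "j \<in> insert x S" and overlap: "i \<noteq> j \<and> a i < b j \<and> a j < b i"
      then consider "i = x" "j \<in> N" | "j = x" "i \<in> N" | "i \<in> S" "j \<in> S" "i \<noteq> x" "j \<noteq> x"
        unfolding N_def by blast
      then show "(c(x := col)) i \<noteq> (c(x := col)) j"
        by cases (use overlap col c_proper x_new N_def in auto)
    qed
    moreover have "c(x := col) ` insert x S \<subseteq> {1..s}"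
      using c_range col x_new by auto
    ultimately show ?thesis by blast
  qed
qed

definition first_neighbour_rank :: "('a \<times> 'a) set \<Rightarrow> ('a \<Rightarrow> nat) \<Rightarrow> 'a \<Rightarrow> nat" where
  "first_neighbour_rank E u j = (LEAST x. x \<in> u ` {k. (j, k) \<in> E})"

lemma first_neighbour_rank_le:
  assumes "(j, k) \<in> E"
  shows "first_neighbour_rank E u j \<le> u k"
  unfolding first_neighbour_rank_def using assms by (intro Least_le) auto

lemma first_neighbour_rank_attained:
  assumes "(j, k) \<in> E"
  obtains k' where "(j, k') \<in> E" and "u k' = first_neighbour_rank E u j"
proof -
  have "first_neighbour_rank E u j \<in> u ` {k. (j, k) \<in> E}"
    unfolding first_neighbour_rank_def by (rule LeastI[of _ "u k"]) (use assms in blast)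
  then show ?thesis using that by (auto simp: image_iff)
qed

definition back_vertices :: "'a set \<Rightarrow> ('a \<times> 'a) set \<Rightarrow> ('a \<Rightarrow> nat) \<Rightarrow> 'a set" where
  "back_vertices V E u = {j\<in>V. \<exists>k. (j, k) \<in> E \<and> u k < u j}"

lemma first_neighbour_rank_less:
  assumes "j \<in> back_vertices V E u"
  shows "first_neighbour_rank E u j < u j"
proof -
  obtain k where "(j, k) \<in> E" "u k < u j"
    using assms unfolding back_vertices_def by blast
  then show ?thesis
    using first_neighbour_rank_le[of j k E u] by simp
qed

lemma card_back_intervals_containing_le:
  fixes V :: "'a set" and E :: "('a \<times> 'a) set" and u :: "'a \<Rightarrow> nat"
  defines "B \<equiv> back_vertices V E u" and "a \<equiv> first_neighbour_rank E u"
  assumes "finite V" and "E \<subseteq> V \<times> V"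
    and bound: "\<forall>p\<in>V. card {w\<in>V. u p < u w \<and> (\<exists>k. (w, k) \<in> E \<and> u k \<le> u p)} \<le> s"
    and "i \<in> B"
  shows "card {j\<in>B. a j \<le> a i \<and> a i < u j} \<le> s"
proof -
  obtain k where "(i, k) \<in> E"
    using \<open>i \<in> B\<close> unfolding B_def back_vertices_def by blast
  then obtain p where p: "(i, p) \<in> E" "u p = a i"
    unfolding a_def by (rule first_neighbour_rank_attained)
  have "{j\<in>B. a j \<le> a i \<and> a i < u j} \<subseteq> {w\<in>V. u p < u w \<and> (\<exists>k. (w, k) \<in> E \<and> u k \<le> u p)}"
  proof
    fix j assume j: "j \<in> {j\<in>B. a j \<le> a i \<and> a i < u j}"
    then obtain k where "(j, k) \<in> E"
      unfolding B_def back_vertices_def by blast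
    then obtain k' where "(j, k') \<in> E" "u k' = a j"
      unfolding a_def by (rule first_neighbour_rank_attained)
    then show "j \<in> {w\<in>V. u p < u w \<and> (\<exists>k. (w, k) \<in> E \<and> u k \<le> u p)}"
      using j p unfolding B_def back_vertices_def by auto
  qed
  then have "card {j\<in>B. a j \<le> a i \<and> a i < u j} \<le> card {w\<in>V. u p < u w \<and> (\<exists>k. (w, k) \<in> E \<and> u k \<le> u p)}"
    using \<open>finite V\<close> by (intro card_mono) auto
  also have "\<dots> \<le> s"
    using bound p(1) \<open>E \<subseteq> V \<times> V\<close> by auto
  finally show ?thesis .
qed

lemma colouring_from_bounded_back_neighbourhoods:
  fixes u :: "'a \<Rightarrow> nat"
  assumes "finite V" and "E \<subseteq> V \<times> V" and "s \<ge> 1"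
    and bound: "\<forall>p\<in>V. card {w\<in>V. u p < u w \<and> (\<exists>k. (w, k) \<in> E \<and> u k \<le> u p)} \<le> s"
  shows "\<exists>c. c ` V \<subseteq> {1..s} \<and>
           (\<forall>i\<in>V. (\<forall>k. (i, k) \<in> E \<longrightarrow> u i \<le> u k) \<or>
              (\<forall>j\<in>V. \<forall>k\<in>V. c j = c i \<and> u i < u j \<and> (j, k) \<in> E \<longrightarrow> u i \<le> u k))"
proof -
  define B where "B = back_vertices V E u"
  define a where "a = first_neighbour_rank E u"
  have "finite B"
    using \<open>finite V\<close> unfolding B_def back_vertices_def by simp
  have a_less: "\<forall>j\<in>B. a j < u j"
    unfolding B_def a_def by (simp add: first_neighbour_rank_less)
  have "\<forall>i\<in>B. card {j\<in>B. a j \<le> a i \<and> a i < u j} \<le> s"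
    unfolding B_def a_def by (simp add: card_back_intervals_containing_le[OF assms(1,2) bound])
  with interval_colouring[OF \<open>finite B\<close> a_less] obtain c where c_range: "c ` B \<subseteq> {1..s}"
    and c_proper: "\<forall>i\<in>B. \<forall>j\<in>B. i \<noteq> j \<and> a i < u j \<and> a j < u i \<longrightarrow> c i \<noteq> c j"
    by blast
  define c' where "c' j = (if j \<in> B then c j else 1)" for j
  have later: "u i \<le> u k" if "i \<in> B" "j \<in> V" "c' j = c' i" "u i < u j" "(j, k) \<in> E" for i j k
  proof (cases "j \<in> B")
    case False
    then show ?thesis using that unfolding B_def back_vertices_def by (auto simp: not_less)
  next
    case True
    have "c i = c j"
      using that(1,3) True unfolding c'_def by simp
    moreover have "a i < u j"
      using a_less that(1,4) by fastforce
    ultimately have "u i \<le> a j"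
      using c_proper that(1,4) True by fastforce
    also have "a j \<le> u k"
      unfolding a_def using first_neighbour_rank_le[OF \<open>(j, k) \<in> E\<close>] .
    finally show ?thesis .
  qed
  have "(\<forall>k. (i, k) \<in> E \<longrightarrow> u i \<le> u k) \<or>
        (\<forall>j\<in>V. \<forall>k\<in>V. c' j = c' i \<and> u i < u j \<and> (j, k) \<in> E \<longrightarrow> u i \<le> u k)" if "i \<in> V" for i
  proof (cases "i \<in> B")
    case True
    then show ?thesis using later by blast
  next
    case False
    then show ?thesis using \<open>i \<in> V\<close> unfolding B_def back_vertices_def by (auto simp: not_less)
  qed
  moreover have "c' ` V \<subseteq> {1..s}"
    using c_range \<open>s \<ge> 1\<close> unfolding c'_def by auto
  ultimately show ?thesis by blast
qed

lemma path_decomposition_edge_vertices: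
  assumes "is_path_decomposition V E X" and "(v, w) \<in> E"
  shows "v \<in> V" and "w \<in> V"
  using assms unfolding is_path_decomposition_def by blast+

lemma card_bag_le_pd_size:
  assumes "a < length X"
  shows "card (X ! a) \<le> pd_size X + 1"
proof -
  have "card (X ! a) \<le> Max (insert 0 (card ` set X))"
    using assms by (intro Max_ge) auto
  then show ?thesis unfolding pd_size_def by linarith
qed

lemma pathwidth_attained:
  assumes "E \<subseteq> V \<times> V"
  shows "\<exists>X. is_path_decomposition V E X \<and> pd_size X = pathwidth V E"
proof -
  have "is_path_decomposition V E [V]"
    using assms unfolding is_path_decomposition_def by auto
  then have "\<exists>s X. is_path_decomposition V E X \<and> pd_size X = s" by blast
  then show ?thesis
    unfolding pathwidth_def by (rule LeastI_ex)
qed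

definition last_bag :: "'a set list \<Rightarrow> 'a \<Rightarrow> nat" where
  "last_bag X v = (GREATEST a. a < length X \<and> v \<in> X ! a)"

lemma last_bag:
  assumes "is_path_decomposition V E X" and "v \<in> V"
  shows "last_bag X v < length X" and "v \<in> X ! last_bag X v"
proof -
  obtain a where "a < length X \<and> v \<in> X ! a"
    using assms unfolding is_path_decomposition_def by blast
  then have "last_bag X v < length X \<and> v \<in> X ! last_bag X v"
    unfolding last_bag_def by (rule GreatestI_nat[where b = "length X"]) simp
  then show "last_bag X v < length X" and "v \<in> X ! last_bag X v" by auto
qed

lemma le_last_bag:
  assumes "a < length X" and "v \<in> X ! a"
  shows "a \<le> last_bag X v"
  unfolding last_bag_def by (rule Greatest_le_nat[where b = "length X"]) (use assms in auto)

lemma edge_endpoint_in_bag_between_last_bags: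
  assumes pd: "is_path_decomposition V E X" and "(w, k) \<in> E"
    and "last_bag X k \<le> b" and "b \<le> last_bag X w"
  shows "w \<in> X ! b"
proof -
  obtain a where a: "a < length X" "w \<in> X ! a" "k \<in> X ! a"
    using pd \<open>(w, k) \<in> E\<close> unfolding is_path_decomposition_def by blast
  have "a \<le> b"
    using le_last_bag[OF a(1,3)] \<open>last_bag X k \<le> b\<close> by simp
  moreover have "w \<in> V"
    using path_decomposition_edge_vertices[OF pd \<open>(w, k) \<in> E\<close>] by simp
  ultimately show ?thesis
    using pd a(1,2) last_bag[OF pd] \<open>b \<le> last_bag X w\<close>
    unfolding is_path_decomposition_def by blast
qed

lemma card_later_with_earlier_neighbour_le_pd_size:
  fixes u :: "'a \<Rightarrow> nat"
  assumes pd: "is_path_decomposition V E X" and "finite V" and "inj_on u V"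
    and u_last_bag: "\<forall>v\<in>V. \<forall>w\<in>V. u w < u v \<longrightarrow> last_bag X w \<le> last_bag X v"
    and "p \<in> V"
  shows "card {w\<in>V. u p < u w \<and> (\<exists>k. (w, k) \<in> E \<and> u k \<le> u p)} \<le> pd_size X"
proof -
  define S where "S = {w\<in>V. u p < u w \<and> (\<exists>k. (w, k) \<in> E \<and> u k \<le> u p)}"
  have "w \<in> X ! last_bag X p" if "w \<in> S" for w
  proof -
    obtain k where k: "(w, k) \<in> E" "u k \<le> u p" and "w \<in> V" "u p < u w"
      using \<open>w \<in> S\<close> unfolding S_def by blast
    have "k \<in> V"
      using path_decomposition_edge_vertices[OF pd k(1)] by simp
    have "last_bag X k \<le> last_bag X p"
    proof (cases "u k = u p")
      case True
      then show ?thesis using \<open>inj_on u V\<close> \<open>k \<in> V\<close> \<open>p \<in> V\<close> by (simp add: inj_on_eq_iff)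
    next
      case False
      then show ?thesis using u_last_bag \<open>k \<in> V\<close> \<open>p \<in> V\<close> k(2) by simp
    qed
    moreover have "last_bag X p \<le> last_bag X w"
      using u_last_bag \<open>w \<in> V\<close> \<open>p \<in> V\<close> \<open>u p < u w\<close> by blast
    ultimately show ?thesis
      using edge_endpoint_in_bag_between_last_bags[OF pd k(1)] by blast
  qed
  moreover have "p \<in> X ! last_bag X p" and "p \<notin> S"
    using last_bag[OF pd \<open>p \<in> V\<close>] unfolding S_def by auto
  moreover have "finite (X ! last_bag X p)"
    using pd last_bag(1)[OF pd \<open>p \<in> V\<close>] \<open>finite V\<close>
    unfolding is_path_decomposition_def by (meson finite_subset)
  ultimately have "card (insert p S) \<le> card (X ! last_bag X p)"
    by (intro card_mono) auto
  also have "\<dots> \<le> pd_size X + 1"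
    using card_bag_le_pd_size last_bag(1)[OF pd \<open>p \<in> V\<close>] by blast
  finally have "card S \<le> pd_size X"
    using \<open>p \<notin> S\<close> \<open>finite V\<close> unfolding S_def by simp
  then show ?thesis
    unfolding S_def .
qed

lemma bij_rank_monotone_in_key:
  fixes V :: "'a::linorder set" and r :: "'a \<Rightarrow> nat"
  assumes "finite V"
  shows "\<exists>u. bij_betw u V {1..card V} \<and> (\<forall>v\<in>V. \<forall>w\<in>V. u w < u v \<longrightarrow> r w \<le> r v)"
proof -
  define before where "before w v \<longleftrightarrow> r w < r v \<or> (r w = r v \<and> w < v)" for w v
  define u where "u v = Suc (card {w\<in>V. before w v})" for v
  have u_less: "u w < u v" if "w \<in> V" "before w v" for w v
  proof -
    have "{x\<in>V. before x w} \<subset> {x\<in>V. before x v}"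
      using that unfolding before_def by auto
    then show ?thesis
      unfolding u_def using \<open>finite V\<close> by (simp add: psubset_card_mono)
  qed
  have "inj_on u V"
  proof (rule inj_onI)
    fix v w assume "v \<in> V" "w \<in> V" "u v = u w"
    show "v = w"
    proof (rule ccontr)
      assume "v \<noteq> w"
      then have "before v w \<or> before w v"
        unfolding before_def by auto
      then show False
        using u_less[OF \<open>v \<in> V\<close>, of w] u_less[OF \<open>w \<in> V\<close>, of v] \<open>u v = u w\<close> by auto
    qed
  qed
  moreover have u_range: "u v \<in> {1..card V}" if "v \<in> V" for v
  proof -
    have "{w\<in>V. before w v} \<subseteq> V - {v}"
      unfolding before_def by auto
    then have "card {w\<in>V. before w v} \<le> card V - 1"
      using \<open>finite V\<close> \<open>v \<in> V\<close> card_mono[of "V - {v}"] by simp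
    moreover have "card V > 0"
      using \<open>finite V\<close> \<open>v \<in> V\<close> card_gt_0_iff by blast
    ultimately show ?thesis
      unfolding u_def by simp
  qed
  moreover have "u ` V = {1..card V}"
    by (rule card_subset_eq) (use \<open>inj_on u V\<close> u_range in \<open>auto simp: card_image\<close>)
  ultimately have "bij_betw u V {1..card V}"
    unfolding bij_betw_def by blast
  moreover have "r w \<le> r v" if "v \<in> V" "w \<in> V" "u w < u v" for v w
  proof (rule ccontr)
    assume "\<not> r w \<le> r v"
    then have "before v w"
      unfolding before_def by simp
    then show False
      using u_less[OF \<open>v \<in> V\<close>] \<open>u w < u v\<close> by fastforce
  qed
  ultimately show ?thesis by blast
qed

theorem mainTheorem13:
  fixes n :: nat and E :: "(nat \<times> nat) set"
  assumes edges: "E \<subseteq> {1..n} \<times> {1..n}"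
    and undirected: "sym E"
    and pw: "pathwidth {1..n} E \<ge> 1"
  shows "\<exists>(c :: nat \<Rightarrow> nat) (u :: nat \<Rightarrow> nat).
           c ` {1..n} \<subseteq> {1..pathwidth {1..n} E} \<and>
           bij_betw u {1..n} {1..n} \<and>
           (\<forall>i\<in>{1..n}.
              (\<forall>k. (i, k) \<in> E \<longrightarrow> u i \<le> u k) \<or>
              (\<forall>j\<in>{1..n}. \<forall>k\<in>{1..n}.
                 c j = c i \<and> u i < u j \<and> (j, k) \<in> E \<longrightarrow> u i \<le> u k))"
proof -
  obtain X where pd: "is_path_decomposition {1..n} E X" and size: "pd_size X = pathwidth {1..n} E"
    using pathwidth_attained[OF edges] by blast
  obtain u where u_bij: "bij_betw u {1..n} {1..n}"
    and u_last_bag: "\<forall>v\<in>{1..n}. \<forall>w\<in>{1..n}. u w < u v \<longrightarrow> last_bag X w \<le> last_bag X v"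
    using bij_rank_monotone_in_key[of "{1..n}" "last_bag X"] by auto
  have "\<forall>p\<in>{1..n}. card {w\<in>{1..n}. u p < u w \<and> (\<exists>k. (w, k) \<in> E \<and> u k \<le> u p)}
          \<le> pathwidth {1..n} E"
    using card_later_with_earlier_neighbour_le_pd_size[OF pd _ bij_betw_imp_inj_on[OF u_bij] u_last_bag]
    by (simp add: size)
  from colouring_from_bounded_back_neighbourhoods[OF _ edges pw this]
  show ?thesis
    using u_bij by auto
qed

end
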